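(* There is a numerical constant $C>0$ such that \[ \min_{\mathcal A_\delta}E_h\le C\Big(\delta^2h^{1/2}+h^2\log\frac1h+\delta^4h^{-1/2}\Big) \] whenever $0\le\delta\le1$ and $0<h\le\frac12$.
   Context: Let $B_1=\{x\in\mathbb R^2:|x|<1\}$. For scalar functions $u,w$ on $(0,1)$ define $U(x)=\frac12(u(|x|)-|x|)\frac{x}{|x|}$ and $W(x)=w(|x|)$. For $\delta\in[0,1]$ let $\mathcal A_\delta$ be the set of pairs $(u,w)$ with $(U,W)\in W^{1,2}(B_1;\mathbb R^2)\times W^{2,2}(B_1)$, $w(0)=0$, $w(1)=1-\delta$. For $h>0$, \[ E_h(u,w)=\int_0^1\frac{u^2}{r}+r(u'+w'^2-1)^2+h^2\Big(rw''^2+\frac{w'^2}{r}\Big)dr . \] *)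

theory Defs
  imports "HOL-Analysis.Analysis"
begin

fun Ck :: "nat \<Rightarrow> ('a::euclidean_space \<Rightarrow> real) \<Rightarrow> bool" where
  "Ck 0 f = continuous_on UNIV f"
| "Ck (Suc n) f = (continuous_on UNIV f \<and> f differentiable_on UNIV \<and>
      (\<forall>i\<in>Basis. Ck n (\<lambda>x. frechet_derivative f (at x) i)))"

definition test_fun :: "'a::euclidean_space set \<Rightarrow> ('a \<Rightarrow> real) \<Rightarrow> bool" where
  "test_fun \<Omega> \<phi> \<longleftrightarrow> (\<forall>n. Ck n \<phi>) \<and> compact (closure {x. \<phi> x \<noteq> 0})
      \<and> closure {x. \<phi> x \<noteq> 0} \<subseteq> \<Omega>"

definition L2_on :: "'a::euclidean_space set \<Rightarrow> ('a \<Rightarrow> 'b::euclidean_space) \<Rightarrow> bool" where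
  "L2_on \<Omega> f \<longleftrightarrow> f \<in> borel_measurable (lebesgue_on \<Omega>)
      \<and> integrable (lebesgue_on \<Omega>) (\<lambda>x. (norm (f x))\<^sup>2)"

definition weak_partial :: "'a::euclidean_space set \<Rightarrow> ('a \<Rightarrow> 'b::euclidean_space) \<Rightarrow> 'a \<Rightarrow> ('a \<Rightarrow> 'b) \<Rightarrow> bool" where
  "weak_partial \<Omega> f i g \<longleftrightarrow> (\<forall>\<phi>. test_fun \<Omega> \<phi> \<longrightarrow>
      integral\<^sup>L (lebesgue_on \<Omega>) (\<lambda>x. frechet_derivative \<phi> (at x) i *\<^sub>R f x)
      = - integral\<^sup>L (lebesgue_on \<Omega>) (\<lambda>x. \<phi> x *\<^sub>R g x))"

definition W12 :: "'a::euclidean_space set \<Rightarrow> ('a \<Rightarrow> 'b::euclidean_space) \<Rightarrow> bool" where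
  "W12 \<Omega> f \<longleftrightarrow> L2_on \<Omega> f \<and> (\<forall>i\<in>Basis. \<exists>g. L2_on \<Omega> g \<and> weak_partial \<Omega> f i g)"

definition W22 :: "'a::euclidean_space set \<Rightarrow> ('a \<Rightarrow> 'b::euclidean_space) \<Rightarrow> bool" where
  "W22 \<Omega> f \<longleftrightarrow> L2_on \<Omega> f \<and> (\<forall>i\<in>Basis. \<exists>g. W12 \<Omega> g \<and> weak_partial \<Omega> f i g)"

definition B1 :: "(real^2) set" where "B1 = ball 0 1"

definition Ufun :: "(real \<Rightarrow> real) \<Rightarrow> real^2 \<Rightarrow> real^2" where
  "Ufun u x = (1/2 * (u (norm x) - norm x)) *\<^sub>R (inverse (norm x) *\<^sub>R x)"

definition Wfun :: "(real \<Rightarrow> real) \<Rightarrow> real^2 \<Rightarrow> real" where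
  "Wfun w x = w (norm x)"

text \<open>Admissible class A_delta.  u and w are taken to be the continuous
  representatives (u continuous on (0,1), w continuous on [0,1]); this is the
  convention under which w(0), w(1), u', w', w'' are meaningful pointwise.\<close>
definition Adm :: "real \<Rightarrow> ((real \<Rightarrow> real) \<times> (real \<Rightarrow> real)) set" where
  "Adm \<delta> = {(u, w). W12 B1 (Ufun u) \<and> W22 B1 (Wfun w)
      \<and> continuous_on {0<..<1} u \<and> continuous_on {0..1} w
      \<and> w 0 = 0 \<and> w 1 = 1 - \<delta>}"

text \<open>The energy (integrand is nonnegative; value in [0, infinity]).\<close>
definition Eh :: "real \<Rightarrow> (real \<Rightarrow> real) \<Rightarrow> (real \<Rightarrow> real) \<Rightarrow> ennreal" where
  "Eh h u w = (\<integral>\<^sup>+ r \<in> {0<..<1}. ennreal (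
        (u r)\<^sup>2 / r + r * (deriv u r + (deriv w r)\<^sup>2 - 1)\<^sup>2
        + h\<^sup>2 * (r * (deriv (deriv w) r)\<^sup>2 + (deriv w r)\<^sup>2 / r)) \<partial>lborel)"

end

theory Submission
  imports Defs
begin

(* The minimum is bounded by the energy of an explicit radial competitor. With m = sqrt h the
   out-of-plane profile is
     w(r) = sqrt (r^2 + h^2) - h - c (exp ((r^2 - 1) / m) - exp (-1 / m)),
   a cone smoothed at its tip on the scale h plus a boundary layer of width m, whose amplitude
   c = O(delta + h) is fixed by w(1) = 1 - delta. For the cone alone w'^2 - 1 = -h^2 / (r^2 + h^2),
   so its stretching, bending and slope terms cost O(h^2 log (1/h)), the logarithm coming from the
   tip. The radial displacement u(r) = r (2 c E - c^2 E^2 / m), E = exp ((r^2 - 1) / m), cancels the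
   large layer term 4 r^2 c E / m of w'^2 up to a factor q - 1 with q = sqrt (r^2 + h^2), so every
   remaining term is O((c^2 + c^4 / m^2) exp ((r - 1) / m)). Integrating over the layer gives
   (c^2 + c^4 / h) m, i.e. delta^2 h^(1/2) + delta^4 h^(-1/2) + h^2. Smooth functions of |x|^2 lie
   in the Sobolev spaces of the disc by classical integration by parts, so the competitor is
   admissible. *)

section \<open>Classically differentiable functions are Sobolev functions\<close>

lemma has_derivative_zero_outside_closed:
  fixes p :: "'a::euclidean_space \<Rightarrow> 'b::real_normed_vector"
  assumes "(p has_derivative p') (at x)" and "closed K" and "\<And>y. y \<notin> K \<Longrightarrow> p y = 0"
    and "x \<notin> K"
  shows "p' = (\<lambda>_. 0)"
proof -
  have "((\<lambda>_. 0) has_derivative (\<lambda>_. 0)) (at x)"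
    by simp
  then have "(p has_derivative (\<lambda>_. 0)) (at x)"
    by (rule has_derivative_transform_within_open[of _ _ _ _ "-K"]) (use assms in auto)
  with assms(1) show ?thesis
    using has_derivative_unique by blast
qed

lemma integrable_lborel_compact_support:
  fixes g :: "'a::euclidean_space \<Rightarrow> 'b::euclidean_space"
  assumes "continuous_on UNIV g" and "compact K" and "\<And>x. x \<notin> K \<Longrightarrow> g x = 0"
  shows "integrable lborel g"
proof -
  have "integrable lborel (\<lambda>x. indicator K x *\<^sub>R g x)"
    by (rule borel_integrable_compact) (use assms in \<open>auto intro: continuous_on_subset\<close>)
  also have "(\<lambda>x. indicator K x *\<^sub>R g x) = g"
    using assms(3) by (auto simp: indicator_def fun_eq_iff)
  finally show ?thesis .
qed

lemma bounded_compact_support: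
  fixes g :: "'a::euclidean_space \<Rightarrow> 'b::euclidean_space"
  assumes "continuous_on UNIV g" and "compact K" and "\<And>x. x \<notin> K \<Longrightarrow> g x = 0"
  obtains M where "\<And>x. norm (g x) \<le> M"
proof -
  have "compact (g ` K)"
    using assms(1,2) by (auto intro: compact_continuous_image continuous_on_subset)
  then obtain M where "0 \<le> M" "\<forall>y\<in>g ` K. norm y \<le> M"
    by (meson bounded_pos compact_imp_bounded less_imp_le)
  then show thesis
    using assms(3) that by (metis image_eqI norm_zero)
qed

lemma integral_lborel_translate:
  fixes g :: "'a::euclidean_space \<Rightarrow> 'b::euclidean_space"
  assumes "g \<in> borel_measurable borel"
  shows "integral\<^sup>L lborel (\<lambda>x. g (x + c)) = integral\<^sup>L lborel g"
proof -
  have "integral\<^sup>L lborel g = integral\<^sup>L (distr lborel borel ((+) c)) g"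
    by (simp add: lborel_distr_plus)
  also have "\<dots> = integral\<^sup>L lborel (\<lambda>x. g (c + x))"
    by (rule integral_distr) (use assms in auto)
  finally show ?thesis
    by (simp add: add.commute)
qed

lemma integral_difference_compact_support_eq_0:
  fixes p :: "'a::euclidean_space \<Rightarrow> 'b::euclidean_space"
  assumes cont: "continuous_on UNIV p" and K: "compact K" "\<And>x. x \<notin> K \<Longrightarrow> p x = 0"
  shows "integral\<^sup>L lborel (\<lambda>x. p (x + c) - p x) = 0"
proof -
  have "integrable lborel (\<lambda>x. p (x + c))"
  proof (rule integrable_lborel_compact_support)
    show "continuous_on UNIV (\<lambda>x. p (x + c))"
      by (rule continuous_on_compose2[OF cont]) (auto intro: continuous_intros)
    show "compact ((\<lambda>x. x - c) ` K)"
      by (rule compact_continuous_image) (auto intro: continuous_intros K(1))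
    show "p (x + c) = 0" if "x \<notin> (\<lambda>x. x - c) ` K" for x
      using that K(2) by (metis add_diff_cancel image_eqI)
  qed
  moreover have "integrable lborel p"
    by (rule integrable_lborel_compact_support[OF cont K])
  moreover have "integral\<^sup>L lborel (\<lambda>x. p (x + c)) = integral\<^sup>L lborel p"
    by (rule integral_lborel_translate) (rule borel_measurable_continuous_onI[OF cont])
  ultimately show ?thesis
    by simp
qed

definition difference_quotient ::
    "('a::real_normed_vector \<Rightarrow> 'b::real_normed_vector) \<Rightarrow> 'a \<Rightarrow> nat \<Rightarrow> 'a \<Rightarrow> 'b"
  where "difference_quotient p v n x = real (Suc n) *\<^sub>R (p (x + inverse (real (Suc n)) *\<^sub>R v) - p x)"

lemma continuous_on_difference_quotient:
  assumes "continuous_on UNIV p"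
  shows "continuous_on UNIV (difference_quotient p v n)"
  unfolding difference_quotient_def[abs_def]
  by (intro continuous_intros continuous_on_compose2[OF assms]) (auto intro: continuous_intros)

lemma difference_quotient_LIMSEQ:
  fixes p :: "'a::real_normed_vector \<Rightarrow> 'b::real_normed_vector"
  assumes "(p has_derivative p') (at x)"
  shows "(\<lambda>n. difference_quotient p v n x) \<longlonglongrightarrow> p' v"
proof -
  define g where "g t = p (x + t *\<^sub>R v)" for t :: real
  have "((\<lambda>t. x + t *\<^sub>R v) has_derivative (\<lambda>t. t *\<^sub>R v)) (at 0)"
    by (auto intro!: derivative_eq_intros)
  from has_derivative_compose[OF this, of p p'] assms
  have "(g has_derivative (\<lambda>t. t *\<^sub>R p' v)) (at 0)"
    using has_derivative_bounded_linear[OF assms]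
    unfolding g_def by (simp add: linear_scale bounded_linear.linear)
  then have "(\<lambda>t. norm (g t - g 0 - t *\<^sub>R p' v) / norm t) \<midarrow>0\<rightarrow> 0"
    by (simp add: has_derivative_at)
  moreover have "norm (g t - g 0 - t *\<^sub>R p' v) / norm t = norm (inverse t *\<^sub>R (g t - g 0) - p' v)"
    if "t \<noteq> 0" for t
  proof -
    have "g t - g 0 - t *\<^sub>R p' v = t *\<^sub>R (inverse t *\<^sub>R (g t - g 0) - p' v)"
      using that by (simp add: algebra_simps)
    then show ?thesis
      using that by simp
  qed
  ultimately have "(\<lambda>t. norm (inverse t *\<^sub>R (g t - g 0) - p' v)) \<midarrow>0\<rightarrow> 0"
    by (metis (no_types, lifting) LIM_equal)
  then have "(\<lambda>t. inverse t *\<^sub>R (g t - g 0)) \<midarrow>0\<rightarrow> p' v"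
    by (simp add: tendsto_norm_zero_iff LIM_zero_iff)
  moreover have "filterlim (\<lambda>n. inverse (real (Suc n))) (at 0) sequentially"
    by (rule filterlim_atI) (use LIMSEQ_inverse_real_of_nat in auto)
  ultimately show ?thesis
    using filterlim_compose by (fastforce simp: difference_quotient_def g_def o_def)
qed

lemma norm_difference_quotient_le:
  fixes p :: "'a::real_normed_vector \<Rightarrow> 'b::real_inner"
  assumes der: "\<And>y. (p has_derivative p' y) (at y)" and bound: "\<And>y. norm (p' y v) \<le> M"
  shows "norm (difference_quotient p v n x) \<le> M"
proof -
  define t where "t = inverse (real (Suc n))"
  define g where "g s = p (x + s *\<^sub>R v)" for s :: real
  have "0 < t"
    by (simp add: t_def)
  have g_der: "(g has_derivative (\<lambda>\<sigma>. \<sigma> *\<^sub>R p' (x + s *\<^sub>R v) v)) (at s)" for s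
  proof -
    have "((\<lambda>s. x + s *\<^sub>R v) has_derivative (\<lambda>\<sigma>. \<sigma> *\<^sub>R v)) (at s)"
      by (auto intro!: derivative_eq_intros)
    from has_derivative_compose[OF this der] show ?thesis
      using has_derivative_bounded_linear[OF der]
      unfolding g_def by (simp add: linear_scale bounded_linear.linear)
  qed
  then have "continuous_on {0..t} g"
    by (meson continuous_at_imp_continuous_on has_derivative_continuous)
  then obtain s where "norm (g t - g 0) \<le> norm ((t - 0) *\<^sub>R p' (x + s *\<^sub>R v) v)"
    using mvt_general[OF \<open>0 < t\<close>, of g "\<lambda>s \<sigma>. \<sigma> *\<^sub>R p' (x + s *\<^sub>R v) v"] g_der by auto
  also have "\<dots> \<le> t * M"
    using bound \<open>0 < t\<close> by (simp add: mult_left_mono)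
  finally have "real (Suc n) * norm (g t - g 0) \<le> M"
    by (simp add: t_def field_simps del: of_nat_Suc)
  then show ?thesis
    by (simp add: difference_quotient_def g_def t_def del: of_nat_Suc)
qed

lemma difference_quotient_eq_0_outside:
  assumes "\<And>x. x \<notin> K \<Longrightarrow> p x = 0" and "\<And>x. x \<in> K \<Longrightarrow> norm x \<le> R"
    and "R + norm v < norm x"
  shows "difference_quotient p v n x = 0"
proof -
  have "norm (inverse (real (Suc n)) *\<^sub>R v) \<le> norm v"
    by (simp add: mult_left_le_one_le inverse_le_1_iff)
  moreover have
    "norm x \<le> norm (x + inverse (real (Suc n)) *\<^sub>R v) + norm (inverse (real (Suc n)) *\<^sub>R v)"
    using norm_triangle_ineq4[of "x + inverse (real (Suc n)) *\<^sub>R v" "inverse (real (Suc n)) *\<^sub>R v"]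
    by (simp only: add_diff_cancel)
  ultimately have "x \<notin> K" "x + inverse (real (Suc n)) *\<^sub>R v \<notin> K"
    using assms(2,3) norm_ge_zero[of v] by fastforce+
  then show ?thesis
    by (simp add: difference_quotient_def assms(1))
qed

text \<open>The integral of a directional derivative vanishes: it is the limit of the integrals of
  difference quotients, which vanish by translation invariance.\<close>

lemma integral_directional_derivative_compact_support:
  fixes p :: "'a::euclidean_space \<Rightarrow> 'b::euclidean_space"
  assumes der: "\<And>x. (p has_derivative p' x) (at x)"
    and cont: "continuous_on UNIV (\<lambda>x. p' x v)"
    and K: "compact K" "\<And>x. x \<notin> K \<Longrightarrow> p x = 0"
  shows "integrable lborel (\<lambda>x. p' x v)" and "integral\<^sup>L lborel (\<lambda>x. p' x v) = 0"
proof -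
  define D where "D = (\<lambda>x. p' x v)"
  define Q where "Q = difference_quotient p v"
  have contp: "continuous_on UNIV p"
    using der by (meson continuous_at_imp_continuous_on has_derivative_continuous)
  have "D x = 0" if "x \<notin> K" for x
    using has_derivative_zero_outside_closed[OF der compact_imp_closed[OF K(1)] K(2) that]
    by (simp add: D_def)
  then obtain M where M: "\<And>x. norm (D x) \<le> M"
    using bounded_compact_support[OF cont[folded D_def] K(1)] by blast
  obtain R where R: "\<And>x. x \<in> K \<Longrightarrow> norm x \<le> R"
    using compact_imp_bounded[OF K(1)] bounded_iff by metis
  define S where "S = cball (0::'a) (R + norm v)"
  have Q_bound: "norm (Q n x) \<le> indicator S x * M" for n x
    using norm_difference_quotient_le[OF der, of v M n x] M
      difference_quotient_eq_0_outside[OF K(2) R, where v=v and x=x and n=n]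
    by (cases "x \<in> S") (auto simp: S_def Q_def D_def)
  have Q_lim: "(\<lambda>n. Q n x) \<longlonglongrightarrow> D x" for x
    unfolding Q_def D_def by (rule difference_quotient_LIMSEQ[OF der])
  have Q_int: "integral\<^sup>L lborel (Q n) = 0" for n
    unfolding Q_def difference_quotient_def[abs_def] integral_scaleR_right
    using integral_difference_compact_support_eq_0[OF contp K] by simp
  have D_meas: "D \<in> borel_measurable lborel"
    using borel_measurable_continuous_onI[OF cont] by (simp add: D_def)
  have Q_meas: "Q n \<in> borel_measurable lborel" for n
    using borel_measurable_continuous_onI[OF continuous_on_difference_quotient[OF contp]]
    by (simp add: Q_def)
  have majorant: "integrable lborel (\<lambda>x. indicator S x * M)"
    using borel_integrable_compact[of S "\<lambda>_. M"] by (simp add: S_def)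
  have "integrable lborel D"
    by (rule integrable_dominated_convergence[where s=Q, OF D_meas Q_meas majorant])
       (use Q_lim Q_bound in auto)
  then show "integrable lborel (\<lambda>x. p' x v)"
    by (simp add: D_def)
  have "(\<lambda>n. integral\<^sup>L lborel (Q n)) \<longlonglongrightarrow> integral\<^sup>L lborel D"
    by (rule integral_dominated_convergence[where s=Q, OF D_meas Q_meas majorant])
       (use Q_lim Q_bound in auto)
  then show "integral\<^sup>L lborel (\<lambda>x. p' x v) = 0"
    using Q_int by (simp add: D_def LIMSEQ_const_iff)
qed

lemma integrable_lebesgue_on_bounded_continuous:
  fixes g :: "'a::euclidean_space \<Rightarrow> 'b::euclidean_space"
  assumes "bounded \<Omega>" and "\<Omega> \<in> sets lborel" and "continuous_on UNIV g"
  shows "integrable (lebesgue_on \<Omega>) g"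
proof -
  obtain c R where R: "\<Omega> \<subseteq> cball c R"
    using assms(1) bounded_subset_cball by blast
  have "integrable lborel (\<lambda>x. indicator (cball c R) x *\<^sub>R g x)"
    by (rule borel_integrable_compact) (use assms in \<open>auto intro: continuous_on_subset\<close>)
  then have "integrable lborel (\<lambda>x. indicator \<Omega> x *\<^sub>R (indicator (cball c R) x *\<^sub>R g x))"
    by (rule integrable_mult_indicator[OF assms(2)])
  also have "(\<lambda>x. indicator \<Omega> x *\<^sub>R (indicator (cball c R) x *\<^sub>R g x)) = (\<lambda>x. indicator \<Omega> x *\<^sub>R g x)"
    using R by (auto simp: fun_eq_iff indicator_def)
  finally have int: "integrable lborel (\<lambda>x. indicator \<Omega> x *\<^sub>R g x)" .
  then have "integrable lebesgue (\<lambda>x. indicator \<Omega> x *\<^sub>R g x)"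
    by (subst integrable_completion) (use borel_measurable_integrable[OF int] in auto)
  then show ?thesis
    using assms(2) by (simp add: integrable_restrict_space)
qed

lemma L2_on_continuous:
  fixes g :: "'a::euclidean_space \<Rightarrow> 'b::euclidean_space"
  assumes "bounded \<Omega>" and "\<Omega> \<in> sets lborel" and "continuous_on UNIV g"
  shows "L2_on \<Omega> g"
  unfolding L2_on_def
proof
  show "g \<in> borel_measurable (lebesgue_on \<Omega>)"
    by (rule continuous_imp_measurable_on_sets_lebesgue)
       (use assms in \<open>auto intro: continuous_on_subset\<close>)
  show "integrable (lebesgue_on \<Omega>) (\<lambda>x. (norm (g x))\<^sup>2)"
    by (rule integrable_lebesgue_on_bounded_continuous)
       (use assms in \<open>auto intro!: continuous_intros\<close>)
qed

lemma integral_lebesgue_on_eq_lborel: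
  fixes g :: "'a::euclidean_space \<Rightarrow> 'b::euclidean_space"
  assumes "\<Omega> \<in> sets lborel" and "g \<in> borel_measurable borel" and "\<And>x. x \<notin> \<Omega> \<Longrightarrow> g x = 0"
  shows "integral\<^sup>L (lebesgue_on \<Omega>) g = integral\<^sup>L lborel g"
proof -
  have "integral\<^sup>L (lebesgue_on \<Omega>) g = integral\<^sup>L lebesgue (\<lambda>x. if x \<in> \<Omega> then g x else 0)"
    by (rule Lebesgue_Measure.integral_restrict_UNIV[symmetric]) (use assms(1) in simp)
  also have "(\<lambda>x. if x \<in> \<Omega> then g x else 0) = g"
    using assms(3) by auto
  also have "integral\<^sup>L lebesgue g = integral\<^sup>L lborel g"
    by (rule integral_completion) (use assms(2) in simp)
  finally show ?thesis .
qed

lemma test_fun_imp_C1: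
  assumes "test_fun \<Omega> \<phi>"
  shows "\<And>x. (\<phi> has_derivative frechet_derivative \<phi> (at x)) (at x)"
    and "continuous_on UNIV \<phi>"
    and "\<And>i. i \<in> Basis \<Longrightarrow> continuous_on UNIV (\<lambda>x. frechet_derivative \<phi> (at x) i)"
proof -
  have C1: "Ck (Suc 0) \<phi>"
    using assms by (auto simp: test_fun_def)
  then show "(\<phi> has_derivative frechet_derivative \<phi> (at x)) (at x)" for x
    by (metis Ck.simps(2) UNIV_I differentiable_on_def frechet_derivative_works)
  show "continuous_on UNIV \<phi>"
    using C1 by simp
  show "continuous_on UNIV (\<lambda>x. frechet_derivative \<phi> (at x) i)" if "i \<in> Basis" for i
    using C1 that by simp
qed

lemma integral_product_rule_compact_support:
  fixes f :: "'a::euclidean_space \<Rightarrow> 'b::euclidean_space" and \<phi> :: "'a \<Rightarrow> real"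
  assumes \<phi>_der: "\<And>x. (\<phi> has_derivative \<phi>' x) (at x)" and \<phi>_cont: "continuous_on UNIV (\<lambda>x. \<phi>' x i)"
    and K: "compact K" "\<And>x. x \<notin> K \<Longrightarrow> \<phi> x = 0"
    and f_der: "\<And>x. (f has_derivative f' x) (at x)" and f_cont: "continuous_on UNIV (\<lambda>x. f' x i)"
  shows "integral\<^sup>L lborel (\<lambda>x. \<phi>' x i *\<^sub>R f x) = - integral\<^sup>L lborel (\<lambda>x. \<phi> x *\<^sub>R f' x i)"
proof -
  define A where "A = (\<lambda>x. \<phi>' x i *\<^sub>R f x)"
  define B where "B = (\<lambda>x. \<phi> x *\<^sub>R f' x i)"
  have "continuous_on UNIV f" "continuous_on UNIV \<phi>"
    using f_der \<phi>_der by (meson continuous_at_imp_continuous_on has_derivative_continuous)+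
  then have "continuous_on UNIV A" "continuous_on UNIV B"
    unfolding A_def B_def using \<phi>_cont f_cont by (auto intro: continuous_intros)
  moreover have "A x = 0" "B x = 0" if "x \<notin> K" for x
    using has_derivative_zero_outside_closed[OF \<phi>_der compact_imp_closed[OF K(1)] K(2) that]
      K(2)[OF that]
    by (simp_all add: A_def B_def)
  moreover have prod_der: "((\<lambda>x. \<phi> x *\<^sub>R f x) has_derivative
      (\<lambda>v. \<phi> x *\<^sub>R f' x v + \<phi>' x v *\<^sub>R f x)) (at x)" for x
    by (rule has_derivative_scaleR[OF \<phi>_der f_der])
  ultimately have "continuous_on UNIV (\<lambda>x. B x + A x)"
    by (intro continuous_on_add)
  then have "integral\<^sup>L lborel (\<lambda>x. B x + A x) = 0"
    unfolding A_def B_def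
    by (rule integral_directional_derivative_compact_support(2)[OF prod_der _ K(1)])
       (use K(2) in simp)
  then show ?thesis
    using integrable_lborel_compact_support[OF \<open>continuous_on UNIV A\<close> K(1)]
      integrable_lborel_compact_support[OF \<open>continuous_on UNIV B\<close> K(1)] \<open>\<And>x. x \<notin> K \<Longrightarrow> A x = 0\<close>
      \<open>\<And>x. x \<notin> K \<Longrightarrow> B x = 0\<close>
    unfolding A_def B_def by (simp add: eq_neg_iff_add_eq_0 add.commute)
qed

lemma weak_partial_if_has_derivative:
  fixes f :: "'a::euclidean_space \<Rightarrow> 'b::euclidean_space"
  assumes \<Omega>: "\<Omega> \<in> sets lborel" and der: "\<And>x. (f has_derivative f' x) (at x)"
    and cont: "continuous_on UNIV (\<lambda>x. f' x i)" and i: "i \<in> Basis"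
  shows "weak_partial \<Omega> f i (\<lambda>x. f' x i)"
  unfolding weak_partial_def
proof (intro allI impI)
  fix \<phi> assume "test_fun \<Omega> \<phi>"
  note \<phi> = test_fun_imp_C1[OF this]
  define K where "K = closure {x. \<phi> x \<noteq> 0}"
  have K: "compact K" "K \<subseteq> \<Omega>" "\<And>x. x \<notin> K \<Longrightarrow> \<phi> x = 0"
    using \<open>test_fun \<Omega> \<phi>\<close> closure_subset[of "{x. \<phi> x \<noteq> 0}"]
    unfolding K_def test_fun_def by auto
  have zero_outside: "\<phi> x = 0" "frechet_derivative \<phi> (at x) i = 0" if "x \<notin> \<Omega>" for x
  proof -
    have "x \<notin> K"
      using K(2) that by blast
    then show "\<phi> x = 0" "frechet_derivative \<phi> (at x) i = 0"
      using K(3) has_derivative_zero_outside_closed[OF \<phi>(1) compact_imp_closed[OF K(1)] K(3)]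
      by auto
  qed
  have "continuous_on UNIV f"
    using der by (meson continuous_at_imp_continuous_on has_derivative_continuous)
  then have "integral\<^sup>L (lebesgue_on \<Omega>) (\<lambda>x. frechet_derivative \<phi> (at x) i *\<^sub>R f x)
      = integral\<^sup>L lborel (\<lambda>x. frechet_derivative \<phi> (at x) i *\<^sub>R f x)"
    using \<phi>(3)[OF i] zero_outside
    by (intro integral_lebesgue_on_eq_lborel[OF \<Omega>] borel_measurable_continuous_onI
        continuous_intros) auto
  moreover have "integral\<^sup>L (lebesgue_on \<Omega>) (\<lambda>x. \<phi> x *\<^sub>R f' x i)
      = integral\<^sup>L lborel (\<lambda>x. \<phi> x *\<^sub>R f' x i)"
    using \<phi>(2) cont zero_outside
    by (intro integral_lebesgue_on_eq_lborel[OF \<Omega>] borel_measurable_continuous_onI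
        continuous_intros) auto
  ultimately show "integral\<^sup>L (lebesgue_on \<Omega>) (\<lambda>x. frechet_derivative \<phi> (at x) i *\<^sub>R f x) =
      - integral\<^sup>L (lebesgue_on \<Omega>) (\<lambda>x. \<phi> x *\<^sub>R f' x i)"
    using integral_product_rule_compact_support[OF \<phi>(1) \<phi>(3)[OF i] K(1,3) der cont] by simp
qed

lemma W12_if_continuous_derivative:
  fixes f :: "'a::euclidean_space \<Rightarrow> 'b::euclidean_space"
  assumes "bounded \<Omega>" and "\<Omega> \<in> sets lborel" and der: "\<And>x. (f has_derivative f' x) (at x)"
    and cont: "\<And>i. i \<in> Basis \<Longrightarrow> continuous_on UNIV (\<lambda>x. f' x i)"
  shows "W12 \<Omega> f"
  unfolding W12_def
proof
  show "L2_on \<Omega> f"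
    using der assms(1,2)
    by (meson L2_on_continuous continuous_at_imp_continuous_on has_derivative_continuous)
  show "\<forall>i\<in>Basis. \<exists>g. L2_on \<Omega> g \<and> weak_partial \<Omega> f i g"
    using L2_on_continuous[OF assms(1,2)] cont weak_partial_if_has_derivative[OF assms(2) der]
    by blast
qed

lemma W22_if_continuous_second_derivative:
  fixes f :: "'a::euclidean_space \<Rightarrow> real"
  assumes "bounded \<Omega>" and "\<Omega> \<in> sets lborel" and der: "\<And>x. (f has_derivative f' x) (at x)"
    and der2: "\<And>i x. i \<in> Basis \<Longrightarrow> ((\<lambda>x. f' x i) has_derivative f'' x i) (at x)"
    and cont: "\<And>i j. i \<in> Basis \<Longrightarrow> j \<in> Basis \<Longrightarrow> continuous_on UNIV (\<lambda>x. f'' x i j)"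
  shows "W22 \<Omega> f"
  unfolding W22_def
proof
  show "L2_on \<Omega> f"
    using der assms(1,2)
    by (meson L2_on_continuous continuous_at_imp_continuous_on has_derivative_continuous)
  show "\<forall>i\<in>Basis. \<exists>g. W12 \<Omega> g \<and> weak_partial \<Omega> f i g"
  proof
    fix i :: 'a assume i: "i \<in> Basis"
    have "continuous_on UNIV (\<lambda>x. f' x i)"
      using der2[OF i] by (meson continuous_at_imp_continuous_on has_derivative_continuous)
    then show "\<exists>g. W12 \<Omega> g \<and> weak_partial \<Omega> f i g"
      using W12_if_continuous_derivative[OF assms(1,2) der2[OF i] cont[OF i]]
        weak_partial_if_has_derivative[OF assms(2) der _ i] by blast
  qed
qed

lemma has_derivative_comp_inner_self:
  fixes F :: "real \<Rightarrow> real"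
  assumes "\<And>s. 0 \<le> s \<Longrightarrow> (F has_real_derivative F' s) (at s)"
  shows "((\<lambda>x::'a::real_inner. F (x \<bullet> x)) has_derivative (\<lambda>v. F' (x \<bullet> x) * (2 * (x \<bullet> v)))) (at x)"
proof -
  have "((\<lambda>x::'a. x \<bullet> x) has_derivative (\<lambda>v. 2 * (x \<bullet> v))) (at x)"
    by (auto intro!: derivative_eq_intros simp: inner_commute)
  moreover have "(F has_derivative (\<lambda>t. F' (x \<bullet> x) * t)) (at (x \<bullet> x))"
    using assms[of "x \<bullet> x"] by (simp add: has_field_derivative_def)
  ultimately show ?thesis
    using has_derivative_compose by fastforce
qed

lemma continuous_on_comp_inner_self:
  fixes F :: "real \<Rightarrow> real"
  assumes "continuous_on {0..} F"
  shows "continuous_on UNIV (\<lambda>x::'a::real_inner. F (x \<bullet> x))"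
  by (rule continuous_on_compose2[OF assms]) (auto intro!: continuous_intros)

lemma W22_comp_inner_self:
  fixes F :: "real \<Rightarrow> real"
  assumes "bounded \<Omega>" and "\<Omega> \<in> sets lborel"
    and der: "\<And>s. 0 \<le> s \<Longrightarrow> (F has_real_derivative F' s) (at s)"
    and der2: "\<And>s. 0 \<le> s \<Longrightarrow> (F' has_real_derivative F'' s) (at s)"
    and cont: "continuous_on {0..} F''"
  shows "W22 \<Omega> (\<lambda>x::'a::euclidean_space. F (x \<bullet> x))"
proof (rule W22_if_continuous_second_derivative[OF assms(1,2)
      has_derivative_comp_inner_self[OF der]])
  show "((\<lambda>x. F' (x \<bullet> x) * (2 * (x \<bullet> i))) has_derivative
        (\<lambda>v. F' (x \<bullet> x) * (2 * (v \<bullet> i)) + F'' (x \<bullet> x) * (2 * (x \<bullet> v)) * (2 * (x \<bullet> i)))) (at x)"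
    for i x :: 'a
  proof -
    have "((\<lambda>x. 2 * (x \<bullet> i)) has_derivative (\<lambda>v. 2 * (v \<bullet> i))) (at x)"
      by (auto intro!: derivative_eq_intros)
    from has_derivative_mult[OF has_derivative_comp_inner_self[OF der2] this] show ?thesis
      by simp
  qed
  have "continuous_on {0..} F'"
    using der2 by (meson DERIV_continuous atLeast_iff continuous_at_imp_continuous_on)
  then show "continuous_on UNIV
      (\<lambda>x. F' (x \<bullet> x) * (2 * (j \<bullet> i)) + F'' (x \<bullet> x) * (2 * (x \<bullet> j)) * (2 * (x \<bullet> i)))"
    for i j :: 'a
    using continuous_on_comp_inner_self[of F'] continuous_on_comp_inner_self[OF cont]
    by (intro continuous_intros) auto
qed

lemma W12_comp_inner_self_scaleR:
  fixes G :: "real \<Rightarrow> real"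
  assumes "bounded \<Omega>" and "\<Omega> \<in> sets lborel"
    and der: "\<And>s. 0 \<le> s \<Longrightarrow> (G has_real_derivative G' s) (at s)"
    and cont: "continuous_on {0..} G'"
  shows "W12 \<Omega> (\<lambda>x::'a::euclidean_space. G (x \<bullet> x) *\<^sub>R x)"
proof (rule W12_if_continuous_derivative[OF assms(1,2)])
  show "((\<lambda>x. G (x \<bullet> x) *\<^sub>R x) has_derivative
        (\<lambda>v. G (x \<bullet> x) *\<^sub>R v + (G' (x \<bullet> x) * (2 * (x \<bullet> v))) *\<^sub>R x)) (at x)" for x :: 'a
    using has_derivative_scaleR[OF has_derivative_comp_inner_self[OF der] has_derivative_ident]
    by simp
  have "continuous_on {0..} G"
    using der by (meson DERIV_continuous atLeast_iff continuous_at_imp_continuous_on)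
  then show "continuous_on UNIV (\<lambda>x. G (x \<bullet> x) *\<^sub>R i + (G' (x \<bullet> x) * (2 * (x \<bullet> i))) *\<^sub>R x)"
    for i :: 'a
    using continuous_on_comp_inner_self[of G] continuous_on_comp_inner_self[OF cont]
    by (intro continuous_intros) auto
qed

section \<open>Pointwise bounds for the energy density of the ansatz\<close>

lemma square_sum2_le: "(a + b)\<^sup>2 \<le> 2 * a\<^sup>2 + 2 * (b::real)\<^sup>2"
proof -
  have "0 \<le> (a - b)\<^sup>2" by simp
  then show ?thesis by (simp add: power2_eq_square algebra_simps)
qed

lemma square_sum3_le: "(a + b + c)\<^sup>2 \<le> 3 * (a\<^sup>2 + b\<^sup>2 + (c::real)\<^sup>2)"
proof -
  have "0 \<le> (a - b)\<^sup>2 + (a - c)\<^sup>2 + (b - c)\<^sup>2" by simp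
  then show ?thesis by (simp add: power2_eq_square algebra_simps)
qed

lemma square_sum4_le: "(a + b + c + d)\<^sup>2 \<le> 4 * (a\<^sup>2 + b\<^sup>2 + c\<^sup>2 + (d::real)\<^sup>2)"
proof -
  have "0 \<le> (a - b)\<^sup>2 + (a - c)\<^sup>2 + (a - d)\<^sup>2 + (b - c)\<^sup>2 + (b - d)\<^sup>2 + (c - d)\<^sup>2" by simp
  then show ?thesis by (simp add: power2_eq_square algebra_simps)
qed

text \<open>The ansatz at a radius \<open>r\<close>, with \<open>m = sqrt h\<close>, \<open>q = sqrt (r\<^sup>2 + h\<^sup>2)\<close>,
  \<open>E = exp ((r\<^sup>2 - 1) / m)\<close> and \<open>E1 = exp ((r - 1) / m)\<close>. In this notation
  \<open>u = r (2 c E - c\<^sup>2 E\<^sup>2 / m)\<close> and \<open>w' = r / q - 2 r c E / m\<close> for the layer amplitude \<open>c\<close>,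
  and the assumptions are the only properties of these quantities that the estimates use.\<close>

locale ansatz_at_radius =
  fixes r h m q E E1 :: real
  assumes r_pos: "0 < r" and r_less_1: "r < 1" and h_pos: "0 < h" and h_le_half: "h \<le> 1/2"
    and m_pos: "0 < m" and m_square: "m\<^sup>2 = h" and q_pos: "0 < q" and q_square: "q\<^sup>2 = r\<^sup>2 + h\<^sup>2"
    and E_pos: "0 < E" and E_le_E1: "E \<le> E1" and E1_le_1: "E1 \<le> 1"
    and E1_layer: "E1 * ((1 - r) / m)\<^sup>2 \<le> 4"
begin

lemma E_square_le: "E\<^sup>2 \<le> E1"
proof -
  have "E * E \<le> E * 1"
    using E_pos E_le_E1 E1_le_1 by (intro mult_left_mono) auto
  then show ?thesis
    using E_le_E1 by (simp add: power2_eq_square)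
qed

lemma r_mult_E_square_le: "r * E\<^sup>2 \<le> E1"
  using E_square_le r_pos r_less_1 mult_left_le_one_le[of "E\<^sup>2" r] by simp

lemma r_mult_E_pow4_le: "r * E^4 \<le> E1"
proof -
  have "E^4 \<le> E\<^sup>2"
    by (rule power_decreasing) (use E_pos E_le_E1 E1_le_1 in auto)
  then have "r * E^4 \<le> r * E\<^sup>2"
    using r_pos by (intro mult_left_mono) auto
  then show ?thesis
    using r_mult_E_square_le by linarith
qed

lemma h_square_div_m_square: "h\<^sup>2 / m\<^sup>2 = h"
  using m_square h_pos by (simp add: power2_eq_square)

lemma h_square_div_m_pow4: "h\<^sup>2 / m^4 = 1"
proof -
  have "m^4 = (m\<^sup>2)\<^sup>2"
    by (simp flip: power_mult)
  then show ?thesis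
    using m_square h_pos by simp
qed

lemma r_le_q: "r \<le> q"
  by (rule power2_le_imp_le) (use q_square q_pos in auto)

lemma q_minus_1_square_le: "(q - 1)\<^sup>2 \<le> 2 * h\<^sup>2 + 2 * (1 - r)\<^sup>2"
proof -
  have "q\<^sup>2 \<le> (r + h)\<^sup>2"
    using q_square r_pos h_pos by (simp add: power2_eq_square algebra_simps)
  then have "q \<le> r + h"
    by (rule power2_le_imp_le) (use r_pos h_pos in auto)
  then have "\<bar>q - 1\<bar>\<^sup>2 \<le> (h + (1 - r))\<^sup>2"
    using r_le_q r_less_1 h_pos by (intro power_mono) auto
  then show ?thesis
    using square_sum2_le[of h "1 - r"] by simp
qed

lemma E_square_mult_layer_le: "E\<^sup>2 * ((1 - r) / m)\<^sup>2 \<le> 4 * E1"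
proof -
  have "E\<^sup>2 * ((1 - r) / m)\<^sup>2 \<le> E1\<^sup>2 * ((1 - r) / m)\<^sup>2"
    using E_pos E_le_E1 by (intro mult_right_mono power_mono) auto
  also have "\<dots> = E1 * (E1 * ((1 - r) / m)\<^sup>2)"
    by (simp add: power2_eq_square)
  also have "\<dots> \<le> E1 * 4"
    using E1_layer E_pos E_le_E1 by (intro mult_left_mono) auto
  finally show ?thesis
    by simp
qed

lemma displacement_term_le:
  "(r * (2*c*E - c\<^sup>2/m*E\<^sup>2))\<^sup>2 / r \<le> 8 * c\<^sup>2 * E1 + 2 * c^4 * E1 / m\<^sup>2"
proof -
  have "(r * (2*c*E - c\<^sup>2/m*E\<^sup>2))\<^sup>2 / r = r * (2*c*E + (- c\<^sup>2/m*E\<^sup>2))\<^sup>2"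
    using r_pos by (simp add: power2_eq_square field_simps)
  also have "\<dots> \<le> r * (2 * (2*c*E)\<^sup>2 + 2 * (- c\<^sup>2/m*E\<^sup>2)\<^sup>2)"
    by (intro mult_left_mono[OF square_sum2_le]) (use r_pos in auto)
  also have "\<dots> = 8 * c\<^sup>2 * (r * E\<^sup>2) + 2 * c^4 * (r * E^4) / m\<^sup>2"
    by (simp add: power2_eq_square power4_eq_xxxx field_simps)
  also have "\<dots> \<le> 8 * c\<^sup>2 * E1 + 2 * c^4 * E1 / m\<^sup>2"
    using r_mult_E_square_le r_mult_E_pow4_le
    by (intro add_mono mult_left_mono divide_right_mono) auto
  finally show ?thesis .
qed

text \<open>The term \<open>4 r\<^sup>2 c E / m\<close> of \<open>u'\<close> cancels the linear layer term of \<open>w'\<^sup>2\<close> up to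
  the factor \<open>q - 1\<close>, which is small wherever \<open>E\<close> is not.\<close>

lemma stretching_defect_eq:
  "(2*c*E - c\<^sup>2/m*E\<^sup>2 + 2*r\<^sup>2*(2*c*E/m - 2*c\<^sup>2*E\<^sup>2/m\<^sup>2)) + (r/q - 2*r*c*E/m)\<^sup>2 - 1
   = - h\<^sup>2/q\<^sup>2 + 4*r\<^sup>2*c*E*(q - 1)/(m*q) + 2*c*E - c\<^sup>2/m*E\<^sup>2"
proof -
  have "r\<^sup>2 = q\<^sup>2 - h\<^sup>2"
    using q_square by simp
  then have "r\<^sup>2/q\<^sup>2 = 1 - h\<^sup>2/q\<^sup>2"
    using q_pos by (simp add: diff_divide_distrib)
  moreover have "(r/q - 2*r*c*E/m)\<^sup>2 = r\<^sup>2/q\<^sup>2 - 4*r\<^sup>2*c*E/(m*q) + 4*r\<^sup>2*c\<^sup>2*E\<^sup>2/m\<^sup>2"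
    using q_pos m_pos by (simp add: power2_eq_square field_simps)
  then have "(2*c*E - c\<^sup>2/m*E\<^sup>2 + 2*r\<^sup>2*(2*c*E/m - 2*c\<^sup>2*E\<^sup>2/m\<^sup>2)) + (r/q - 2*r*c*E/m)\<^sup>2 - 1
      = - h\<^sup>2/q\<^sup>2 + 4*r\<^sup>2*c*E*(q - 1)/(m*q) + 2*c*E - c\<^sup>2/m*E\<^sup>2 + (r\<^sup>2/q\<^sup>2 - 1 + h\<^sup>2/q\<^sup>2)"
    using q_pos m_pos by (simp add: power2_eq_square field_simps)
  ultimately show ?thesis
    by simp
qed

lemma stretching_cross_term_le: "r * (4*r\<^sup>2*c*E*(q - 1)/(m*q))\<^sup>2 \<le> 144 * c\<^sup>2 * E1"
proof -
  have "r\<^sup>2 \<le> q"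
    using r_le_q r_pos r_less_1 mult_mono[of r q r 1] by (simp add: power2_eq_square)
  then have r_factor: "r * (r\<^sup>2/q)\<^sup>2 \<le> 1"
    using q_pos r_pos r_less_1 by (intro mult_le_one power_le_one) auto
  have "r * (4*r\<^sup>2*c*E*(q - 1)/(m*q))\<^sup>2 = (4*c*E*(q - 1)/m)\<^sup>2 * (r * (r\<^sup>2/q)\<^sup>2)"
    by (simp add: power_mult_distrib power_divide)
  also have "\<dots> \<le> (4*c*E*(q - 1)/m)\<^sup>2"
    using r_factor by (intro mult_left_le) auto
  also have "\<dots> = 16 * c\<^sup>2 * E\<^sup>2 * (q - 1)\<^sup>2 / m\<^sup>2"
    by (simp add: power_mult_distrib power_divide)
  also have "\<dots> \<le> 16 * c\<^sup>2 * E\<^sup>2 * (2 * h\<^sup>2 + 2 * (1 - r)\<^sup>2) / m\<^sup>2"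
    using q_minus_1_square_le by (intro divide_right_mono mult_left_mono) auto
  also have "\<dots> = 32 * c\<^sup>2 * (E\<^sup>2 * (h\<^sup>2 / m\<^sup>2)) + 32 * c\<^sup>2 * (E\<^sup>2 * ((1 - r) / m)\<^sup>2)"
    by (simp add: power_divide algebra_simps add_divide_distrib)
  also have "\<dots> \<le> 32 * c\<^sup>2 * (E1 / 2) + 32 * c\<^sup>2 * (4 * E1)"
  proof (intro add_mono mult_left_mono)
    show "E\<^sup>2 * (h\<^sup>2 / m\<^sup>2) \<le> E1 / 2"
      unfolding h_square_div_m_square
      using mult_mono[OF E_square_le h_le_half] E_pos E_le_E1 h_pos by simp
  qed (use E_square_mult_layer_le in auto)
  finally show ?thesis
    by (simp add: mult_ac)
qed

lemma stretching_term_le: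
  "r * ((2*c*E - c\<^sup>2/m*E\<^sup>2 + 2*r\<^sup>2*(2*c*E/m - 2*c\<^sup>2*E\<^sup>2/m\<^sup>2)) + (r/q - 2*r*c*E/m)\<^sup>2 - 1)\<^sup>2
   \<le> 4 * (r * h^4 / q^4) + 592 * c\<^sup>2 * E1 + 4 * c^4 * E1 / m\<^sup>2"
proof -
  define A where "A = 4*r\<^sup>2*c*E*(q - 1)/(m*q)"
  have "r * (- h\<^sup>2/q\<^sup>2 + A + 2*c*E + (- c\<^sup>2/m*E\<^sup>2))\<^sup>2
      \<le> r * (4 * ((- h\<^sup>2/q\<^sup>2)\<^sup>2 + A\<^sup>2 + (2*c*E)\<^sup>2 + (- c\<^sup>2/m*E\<^sup>2)\<^sup>2))"
    by (intro mult_left_mono[OF square_sum4_le]) (use r_pos in auto)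
  also have "\<dots> = 4 * (r * h^4 / q^4 + r * A\<^sup>2 + 4 * c\<^sup>2 * (r * E\<^sup>2) + c^4 * (r * E^4) / m\<^sup>2)"
    by (simp add: power2_eq_square power4_eq_xxxx algebra_simps)
  also have "\<dots> \<le> 4 * (r * h^4 / q^4 + 144 * c\<^sup>2 * E1 + 4 * c\<^sup>2 * E1 + c^4 * E1 / m\<^sup>2)"
    using stretching_cross_term_le r_mult_E_square_le r_mult_E_pow4_le r_pos
    unfolding A_def by (intro mult_left_mono add_mono divide_right_mono) auto
  finally show ?thesis
    unfolding stretching_defect_eq A_def by (simp add: algebra_simps)
qed

lemma bending_term_le:
  "h\<^sup>2 * (r * (h\<^sup>2/q^3 - 2*c*E/m - 4*r\<^sup>2*c*E/m\<^sup>2)\<^sup>2) \<le> 3 * (h^6 * r / q^6) + 54 * c\<^sup>2 * E1"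
proof -
  have "h\<^sup>2 * (r * (h\<^sup>2/q^3 - 2*c*E/m - 4*r\<^sup>2*c*E/m\<^sup>2)\<^sup>2)
      = h\<^sup>2 * r * (h\<^sup>2/q^3 + (- 2*c*E/m) + (- 4*r\<^sup>2*c*E/m\<^sup>2))\<^sup>2"
    by (simp add: algebra_simps)
  also have "\<dots> \<le> h\<^sup>2 * r * (3 * ((h\<^sup>2/q^3)\<^sup>2 + (- 2*c*E/m)\<^sup>2 + (- 4*r\<^sup>2*c*E/m\<^sup>2)\<^sup>2))"
    by (intro mult_left_mono[OF square_sum3_le]) (use r_pos in auto)
  also have "\<dots> = 3 * (h^6 * r / q^6) + 12 * c\<^sup>2 * (h\<^sup>2 / m\<^sup>2) * (r * E\<^sup>2)
      + 48 * c\<^sup>2 * (h\<^sup>2 / m^4) * (r^4 * (r * E\<^sup>2))"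
    using q_pos m_pos by (simp add: power2_eq_square field_simps power_numeral_reduce)
  also have "\<dots> \<le> 3 * (h^6 * r / q^6) + 12 * c\<^sup>2 * (1/2) * E1 + 48 * c\<^sup>2 * 1 * (1 * E1)"
    unfolding h_square_div_m_square h_square_div_m_pow4
    using h_le_half r_mult_E_square_le E_pos r_pos r_less_1 power_le_one[of r 4]
    by (intro add_mono mult_left_mono mult_mono) auto
  finally show ?thesis
    by (simp add: algebra_simps)
qed

lemma slope_term_le:
  "h\<^sup>2 * ((r/q - 2*r*c*E/m)\<^sup>2 / r) \<le> 2 * (h\<^sup>2 * r / q\<^sup>2) + 4 * c\<^sup>2 * E1"
proof -
  have "h\<^sup>2 * ((r/q - 2*r*c*E/m)\<^sup>2 / r) = h\<^sup>2 / r * (r/q + (- 2*r*c*E/m))\<^sup>2"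
    by simp
  also have "\<dots> \<le> h\<^sup>2 / r * (2 * (r/q)\<^sup>2 + 2 * (- 2*r*c*E/m)\<^sup>2)"
    by (intro mult_left_mono[OF square_sum2_le]) (use r_pos in auto)
  also have "\<dots> = 2 * (h\<^sup>2 * r / q\<^sup>2) + 8 * c\<^sup>2 * (h\<^sup>2 / m\<^sup>2) * (r * E\<^sup>2)"
    using r_pos q_pos m_pos by (simp add: power2_eq_square field_simps)
  also have "\<dots> \<le> 2 * (h\<^sup>2 * r / q\<^sup>2) + 8 * c\<^sup>2 * (1/2) * E1"
    unfolding h_square_div_m_square using h_le_half r_mult_E_square_le E_pos r_pos
    by (intro add_mono mult_left_mono mult_mono) auto
  finally show ?thesis
    by simp
qed

lemma density_le_majorant:
  "(r * (2*c*E - c\<^sup>2/m*E\<^sup>2))\<^sup>2 / r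
   + r * ((2*c*E - c\<^sup>2/m*E\<^sup>2 + 2*r\<^sup>2*(2*c*E/m - 2*c\<^sup>2*E\<^sup>2/m\<^sup>2)) + (r/q - 2*r*c*E/m)\<^sup>2 - 1)\<^sup>2
   + h\<^sup>2 * (r * (h\<^sup>2/q^3 - 2*c*E/m - 4*r\<^sup>2*c*E/m\<^sup>2)\<^sup>2 + (r/q - 2*r*c*E/m)\<^sup>2 / r)
   \<le> 4 * (h^4 * r / (r\<^sup>2 + h\<^sup>2)\<^sup>2) + 3 * (h^6 * r / (r\<^sup>2 + h\<^sup>2)^3) + 2 * (h\<^sup>2 * r / (r\<^sup>2 + h\<^sup>2))
     + (700 * c\<^sup>2 + 6 * c^4 / m\<^sup>2) * E1"
proof -
  have "q^4 = (r\<^sup>2 + h\<^sup>2)\<^sup>2" "q^6 = (r\<^sup>2 + h\<^sup>2)^3"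
    unfolding q_square[symmetric] by (simp_all flip: power_mult)
  then have "r * h^4 / q^4 = h^4 * r / (r\<^sup>2 + h\<^sup>2)\<^sup>2" "h^6 * r / q^6 = h^6 * r / (r\<^sup>2 + h\<^sup>2)^3"
    "h\<^sup>2 * r / q\<^sup>2 = h\<^sup>2 * r / (r\<^sup>2 + h\<^sup>2)"
    unfolding q_square by (simp_all add: mult.commute)
  moreover have "(700 * c\<^sup>2 + 6 * c^4 / m\<^sup>2) * E1 = 8 * c\<^sup>2 * E1 + 592 * c\<^sup>2 * E1 + 54 * c\<^sup>2 * E1
      + 4 * c\<^sup>2 * E1 + 42 * c\<^sup>2 * E1 + 2 * c^4 * E1 / m\<^sup>2 + 4 * c^4 * E1 / m\<^sup>2"
    by (simp add: algebra_simps)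
  moreover have "0 \<le> 42 * c\<^sup>2 * E1"
    using E_pos E_le_E1 by auto
  ultimately show ?thesis
    unfolding distrib_left[of "h\<^sup>2"]
    using displacement_term_le[of c] stretching_term_le[of c] bending_term_le[of c]
      slope_term_le[of c]
    by linarith
qed

end

section \<open>The ansatz and its admissibility\<close>

text \<open>The profiles are functions of \<open>s = r\<^sup>2\<close>, so that \<open>x \<mapsto> F (x \<bullet> x)\<close> is smooth across the
  origin.\<close>

definition w_profile :: "real \<Rightarrow> real \<Rightarrow> real \<Rightarrow> real \<Rightarrow> real" where
  "w_profile h m c s = sqrt (s + h\<^sup>2) - h - c * (exp ((s - 1) / m) - exp (- 1 / m))"

definition w_profile' :: "real \<Rightarrow> real \<Rightarrow> real \<Rightarrow> real \<Rightarrow> real" where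
  "w_profile' h m c s = 1 / (2 * sqrt (s + h\<^sup>2)) - c * exp ((s - 1) / m) / m"

definition w_profile'' :: "real \<Rightarrow> real \<Rightarrow> real \<Rightarrow> real \<Rightarrow> real" where
  "w_profile'' h m c s = - 1 / (4 * (s + h\<^sup>2) * sqrt (s + h\<^sup>2)) - c * exp ((s - 1) / m) / m\<^sup>2"

definition u_profile :: "real \<Rightarrow> real \<Rightarrow> real \<Rightarrow> real" where
  "u_profile m c s = 2 * c * exp ((s - 1) / m) - c\<^sup>2 / m * (exp ((s - 1) / m))\<^sup>2"

definition u_profile' :: "real \<Rightarrow> real \<Rightarrow> real \<Rightarrow> real" where
  "u_profile' m c s = 2 * c * exp ((s - 1) / m) / m - 2 * c\<^sup>2 * (exp ((s - 1) / m))\<^sup>2 / m\<^sup>2"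

definition w_ansatz :: "real \<Rightarrow> real \<Rightarrow> real \<Rightarrow> real \<Rightarrow> real" where
  "w_ansatz h m c r = w_profile h m c (r\<^sup>2)"

definition u_ansatz :: "real \<Rightarrow> real \<Rightarrow> real \<Rightarrow> real" where
  "u_ansatz m c r = r * u_profile m c (r\<^sup>2)"

definition layer_amplitude :: "real \<Rightarrow> real \<Rightarrow> real \<Rightarrow> real" where
  "layer_amplitude h m \<delta> = (sqrt (1 + h\<^sup>2) - h - (1 - \<delta>)) / (1 - exp (- 1 / m))"

lemma w_profile_has_derivative:
  assumes "0 < h" and "0 < m" and "0 \<le> s"
  shows "(w_profile h m c has_real_derivative w_profile' h m c s) (at s)"
proof -
  have "0 < s + h\<^sup>2"
    using assms by (simp add: add_nonneg_pos)
  then show ?thesis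
    unfolding w_profile_def w_profile'_def using assms
    by (auto intro!: derivative_eq_intros simp: field_simps)
qed

lemma w_profile'_has_derivative:
  assumes "0 < h" and "0 < m" and "0 \<le> s"
  shows "(w_profile' h m c has_real_derivative w_profile'' h m c s) (at s)"
proof -
  have pos: "0 < s + h\<^sup>2"
    using assms by (simp add: add_nonneg_pos)
  then have "sqrt (s + h\<^sup>2) * sqrt (s + h\<^sup>2) = s + h\<^sup>2"
    by simp
  with pos have "((\<lambda>s. 1 / (2 * sqrt (s + h\<^sup>2))) has_real_derivative
      - 1 / (4 * (s + h\<^sup>2) * sqrt (s + h\<^sup>2))) (at s)"
    by (auto intro!: derivative_eq_intros simp: field_simps power2_eq_square)
  moreover have
    "((\<lambda>s. c * exp ((s - 1) / m) / m) has_real_derivative c * exp ((s - 1) / m) / m\<^sup>2) (at s)"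
    using assms by (auto intro!: derivative_eq_intros simp: field_simps power2_eq_square)
  ultimately show ?thesis
    unfolding w_profile'_def w_profile''_def by (rule DERIV_diff)
qed

lemma u_profile_has_derivative:
  assumes "0 < m"
  shows "(u_profile m c has_real_derivative u_profile' m c s) (at s)"
  unfolding u_profile_def u_profile'_def using assms
  by (auto intro!: derivative_eq_intros simp: field_simps power2_eq_square)

lemma continuous_on_w_profile'':
  assumes "0 < h" and "0 < m"
  shows "continuous_on {0..} (w_profile'' h m c)"
proof -
  have "x + h\<^sup>2 \<noteq> 0" "4 * x + 4 * h\<^sup>2 \<noteq> 0" if "0 \<le> x" for x
    using assms that add_nonneg_pos[of x "h\<^sup>2"] by auto
  then show ?thesis
    unfolding w_profile''_def
    by (intro continuous_intros) (use assms in auto)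
qed

lemma continuous_on_u_profile':
  assumes "0 < m"
  shows "continuous_on UNIV (u_profile' m c)"
  unfolding u_profile'_def using assms by (intro continuous_intros) auto

lemma Wfun_comp_square: "Wfun (\<lambda>r. F (r\<^sup>2)) = (\<lambda>x. F (x \<bullet> x))"
  by (simp add: fun_eq_iff Wfun_def power2_norm_eq_inner)

lemma Ufun_mult_comp_square: "Ufun (\<lambda>r. r * G (r\<^sup>2)) = (\<lambda>x. ((G (x \<bullet> x) - 1) / 2) *\<^sub>R x)"
proof
  fix x :: "real^2"
  show "Ufun (\<lambda>r. r * G (r\<^sup>2)) x = ((G (x \<bullet> x) - 1) / 2) *\<^sub>R x"
  proof (cases "x = 0")
    case False
    then have "1/2 * (norm x * G (x \<bullet> x) - norm x) * inverse (norm x) = (G (x \<bullet> x) - 1) / 2"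
      by (simp add: field_simps)
    then show ?thesis
      by (simp add: Ufun_def power2_norm_eq_inner)
  qed (simp add: Ufun_def)
qed

lemma w_profile_at_0: "0 < h \<Longrightarrow> w_profile h m c 0 = 0"
  by (simp add: w_profile_def)

lemma w_profile_layer_amplitude_at_1:
  assumes "0 < m"
  shows "w_profile h m (layer_amplitude h m \<delta>) 1 = 1 - \<delta>"
proof -
  have "exp (- 1 / m) < 1"
    using assms by simp
  then show ?thesis
    by (simp add: w_profile_def layer_amplitude_def)
qed

lemma ansatz_in_Adm:
  assumes "0 < h" and "0 < m" and "w_profile h m c 1 = 1 - \<delta>"
  shows "(u_ansatz m c, w_ansatz h m c) \<in> Adm \<delta>"
proof -
  have B1: "bounded B1" "B1 \<in> sets lborel"
    by (auto simp: B1_def)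
  have "W22 B1 (Wfun (w_ansatz h m c))"
    unfolding w_ansatz_def Wfun_comp_square
    by (rule W22_comp_inner_self[OF B1 w_profile_has_derivative w_profile'_has_derivative
          continuous_on_w_profile'']) (use assms in auto)
  moreover have "W12 B1 (Ufun (u_ansatz m c))"
  proof -
    have "((\<lambda>s. (u_profile m c s - 1) / 2) has_real_derivative u_profile' m c s / 2) (at s)" for s
      using u_profile_has_derivative[OF assms(2)] by (auto intro!: derivative_eq_intros)
    moreover have "continuous_on {0..} (\<lambda>s. u_profile' m c s / 2)"
      using continuous_on_u_profile'[OF assms(2)]
      by (auto intro!: continuous_intros intro: continuous_on_subset)
    ultimately show ?thesis
      unfolding u_ansatz_def Ufun_mult_comp_square by (rule W12_comp_inner_self_scaleR[OF B1])
  qed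
  moreover have "continuous_on {0<..<1} (u_ansatz m c)" "continuous_on {0..1} (w_ansatz h m c)"
    unfolding u_ansatz_def u_profile_def w_ansatz_def w_profile_def
    by (intro continuous_intros; use assms in auto)+
  ultimately show ?thesis
    using assms w_profile_at_0 by (simp add: Adm_def w_ansatz_def)
qed

lemma has_real_derivative_power2: "((\<lambda>r::real. r\<^sup>2) has_real_derivative 2 * r) (at r)"
  by (auto intro!: derivative_eq_intros)

lemma deriv_u_ansatz:
  assumes m_pos: "0 < m"
  shows "deriv (u_ansatz m c) r = u_profile m c (r\<^sup>2) + u_profile' m c (r\<^sup>2) * (2 * r) * r"
proof -
  have "((\<lambda>r. u_profile m c (r\<^sup>2)) has_real_derivative u_profile' m c (r\<^sup>2) * (2 * r)) (at r)"
    by (rule DERIV_chain2[OF u_profile_has_derivative[OF m_pos] has_real_derivative_power2])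
  from DERIV_mult[OF DERIV_ident this] show ?thesis
    unfolding u_ansatz_def by (intro DERIV_imp_deriv) simp
qed

context
  fixes h m c :: real
  assumes h_pos: "0 < h" and m_pos: "0 < m"
begin

lemma deriv_w_ansatz: "deriv (w_ansatz h m c) = (\<lambda>r. w_profile' h m c (r\<^sup>2) * (2 * r))"
proof
  fix r :: real
  have "(w_ansatz h m c has_real_derivative w_profile' h m c (r\<^sup>2) * (2 * r)) (at r)"
    unfolding w_ansatz_def
    by (rule DERIV_chain2[OF w_profile_has_derivative has_real_derivative_power2])
       (use h_pos m_pos in auto)
  then show "deriv (w_ansatz h m c) r = w_profile' h m c (r\<^sup>2) * (2 * r)"
    by (rule DERIV_imp_deriv)
qed

lemma deriv2_w_ansatz:
  "deriv (deriv (w_ansatz h m c)) r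
    = w_profile'' h m c (r\<^sup>2) * (2 * r) * (2 * r) + 2 * w_profile' h m c (r\<^sup>2)"
proof -
  have "((\<lambda>r. w_profile' h m c (r\<^sup>2)) has_real_derivative w_profile'' h m c (r\<^sup>2) * (2 * r)) (at r)"
    by (rule DERIV_chain2[OF w_profile'_has_derivative has_real_derivative_power2])
       (use h_pos m_pos in auto)
  from DERIV_mult[OF this, of "\<lambda>r. 2 * r" 2] show ?thesis
    unfolding deriv_w_ansatz by (intro DERIV_imp_deriv) (auto intro!: derivative_eq_intros)
qed

end

section \<open>Energy of the ansatz\<close>

lemma exp_neg_mult_square_le:
  fixes x :: real
  assumes "0 \<le> x"
  shows "exp (- x) * x\<^sup>2 \<le> 4"
proof -
  have "x / 2 \<le> exp (x / 2)"
    using exp_ge_add_one_self[of "x / 2"] by linarith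
  then have "(x / 2)\<^sup>2 \<le> (exp (x / 2))\<^sup>2"
    using assms by (intro power_mono) auto
  also have "(exp (x / 2))\<^sup>2 = exp x"
    by (simp add: power2_eq_square flip: exp_add)
  finally have "x\<^sup>2 \<le> 4 * exp x"
    by (simp add: power_divide)
  then have "exp (- x) * x\<^sup>2 \<le> exp (- x) * (4 * exp x)"
    by (intro mult_left_mono) auto
  then show ?thesis
    by (simp add: exp_minus field_simps)
qed

lemma ansatz_at_radius_sqrt_exp:
  assumes "0 < r" and "r < 1" and "0 < h" and "h \<le> 1/2"
  shows "ansatz_at_radius r h (sqrt h) (sqrt (r\<^sup>2 + h\<^sup>2))
    (exp ((r\<^sup>2 - 1) / sqrt h)) (exp ((r - 1) / sqrt h))"
proof
  have "r\<^sup>2 \<le> r"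
    using assms by (simp add: power2_eq_square mult_left_le_one_le)
  then show "exp ((r\<^sup>2 - 1) / sqrt h) \<le> exp ((r - 1) / sqrt h)"
    using assms by (simp add: divide_right_mono)
  show "exp ((r - 1) / sqrt h) \<le> 1"
    using assms by (simp add: divide_nonpos_pos)
  have "exp ((r - 1) / sqrt h) = exp (- ((1 - r) / sqrt h))"
    by (simp add: minus_divide_left)
  then show "exp ((r - 1) / sqrt h) * ((1 - r) / sqrt h)\<^sup>2 \<le> 4"
    using exp_neg_mult_square_le[of "(1 - r) / sqrt h"] assms by simp
  have "0 < r\<^sup>2 + h\<^sup>2"
    using assms by (simp add: add_nonneg_pos)
  then show "0 < sqrt (r\<^sup>2 + h\<^sup>2)" "(sqrt (r\<^sup>2 + h\<^sup>2))\<^sup>2 = r\<^sup>2 + h\<^sup>2"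
    by auto
qed (use assms in auto)

definition energy_density :: "real \<Rightarrow> (real \<Rightarrow> real) \<Rightarrow> (real \<Rightarrow> real) \<Rightarrow> real \<Rightarrow> real" where
  "energy_density h u w r = (u r)\<^sup>2 / r + r * (deriv u r + (deriv w r)\<^sup>2 - 1)\<^sup>2
      + h\<^sup>2 * (r * (deriv (deriv w) r)\<^sup>2 + (deriv w r)\<^sup>2 / r)"

definition density_majorant :: "real \<Rightarrow> real \<Rightarrow> real \<Rightarrow> real \<Rightarrow> real" where
  "density_majorant h m P r = 4 * (h^4 * r / (r\<^sup>2 + h\<^sup>2)\<^sup>2) + 3 * (h^6 * r / (r\<^sup>2 + h\<^sup>2)^3)
      + 2 * (h\<^sup>2 * r / (r\<^sup>2 + h\<^sup>2)) + P * exp ((r - 1) / m)"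

definition majorant_primitive :: "real \<Rightarrow> real \<Rightarrow> real \<Rightarrow> real \<Rightarrow> real" where
  "majorant_primitive h m P r = - 2 * h^4 / (r\<^sup>2 + h\<^sup>2) - 3 * h^6 / (4 * (r\<^sup>2 + h\<^sup>2)\<^sup>2)
      + h\<^sup>2 * ln (r\<^sup>2 + h\<^sup>2) + P * m * exp ((r - 1) / m)"

lemma energy_density_ansatz_le:
  assumes "0 < r" and "r < 1" and "0 < h" and "h \<le> 1/2"
  shows "energy_density h (u_ansatz (sqrt h) c) (w_ansatz h (sqrt h) c) r
    \<le> density_majorant h (sqrt h) (700 * c\<^sup>2 + 6 * c^4 / h) r"
proof -
  define m q E E1 where "m = sqrt h" and "q = sqrt (r\<^sup>2 + h\<^sup>2)"
    and "E = exp ((r\<^sup>2 - 1) / m)" and "E1 = exp ((r - 1) / m)"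
  interpret ansatz_at_radius r h m q E E1
    unfolding m_def q_def E_def E1_def by (rule ansatz_at_radius_sqrt_exp[OF assms])
  have "u_ansatz m c r = r * (2*c*E - c\<^sup>2/m*E\<^sup>2)"
    by (simp add: u_ansatz_def u_profile_def E_def)
  moreover have "deriv (u_ansatz m c) r = 2*c*E - c\<^sup>2/m*E\<^sup>2 + 2*r\<^sup>2*(2*c*E/m - 2*c\<^sup>2*E\<^sup>2/m\<^sup>2)"
    unfolding deriv_u_ansatz[OF m_pos] u_profile_def u_profile'_def E_def[symmetric]
    by (simp add: algebra_simps power2_eq_square)
  moreover have "deriv (w_ansatz h m c) r = r/q - 2*r*c*E/m"
    unfolding deriv_w_ansatz[OF h_pos m_pos] w_profile'_def E_def[symmetric] q_def[symmetric]
    using q_pos m_pos by (simp add: field_simps)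
  moreover have "deriv (deriv (w_ansatz h m c)) r = h\<^sup>2/q^3 - 2*c*E/m - 4*r\<^sup>2*c*E/m\<^sup>2"
  proof -
    have "deriv (deriv (w_ansatz h m c)) r
        = (- 1 / (4 * q\<^sup>2 * q) - c * E / m\<^sup>2) * (2*r) * (2*r) + 2 * (1 / (2 * q) - c * E / m)"
      unfolding deriv2_w_ansatz[OF h_pos m_pos] w_profile'_def w_profile''_def E_def[symmetric]
        q_def[symmetric] by (simp add: q_square)
    also have "\<dots> = (q\<^sup>2 - r\<^sup>2) / q^3 - 2*c*E/m - 4*r\<^sup>2*c*E/m\<^sup>2"
      using q_pos m_pos by (simp add: field_simps power2_eq_square power3_eq_cube)
    finally show ?thesis
      using q_square by simp
  qed
  ultimately show ?thesis
    using density_le_majorant m_square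
    by (simp add: energy_density_def density_majorant_def E1_def flip: m_def)
qed

lemma Eh_le_has_integral:
  assumes le: "\<And>r. r \<in> {0<..<1} \<Longrightarrow> energy_density h u w r \<le> g r"
    and nonneg: "\<And>r. r \<in> {0<..<1} \<Longrightarrow> 0 \<le> g r"
    and int: "(g has_integral I) {0<..<1}"
  shows "Eh h u w \<le> ennreal I"
proof -
  have "Eh h u w = (\<integral>\<^sup>+ r. ennreal (energy_density h u w r) * indicator {0<..<1} r \<partial>lborel)"
    by (simp add: Eh_def energy_density_def)
  also have "\<dots> \<le> (\<integral>\<^sup>+ r. ennreal (indicator {0<..<1} r * g r) \<partial>lborel)"
    using le by (intro nn_integral_mono) (auto simp: indicator_def ennreal_leI)
  also have "\<dots> = ennreal I"
    using nn_integral_has_integral_lebesgue[OF nonneg int] by simp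
  finally show ?thesis .
qed

lemma majorant_primitive_has_derivative:
  assumes "0 < h" and "0 < m"
  shows "(majorant_primitive h m P has_real_derivative density_majorant h m P r) (at r)"
proof -
  define s where "s = r\<^sup>2 + h\<^sup>2"
  have "0 < s"
    using assms by (simp add: add_nonneg_pos s_def)
  then have "((\<lambda>s. - 2 * h^4 / s - 3 * h^6 / (4 * s\<^sup>2) + h\<^sup>2 * ln s) has_real_derivative
      2 * h^4 / s\<^sup>2 + 3 * h^6 / (2 * s^3) + h\<^sup>2 / s) (at s)"
    by (auto intro!: derivative_eq_intros simp: field_simps power2_eq_square power3_eq_cube)
  moreover have "((\<lambda>r. r\<^sup>2 + h\<^sup>2) has_real_derivative 2 * r) (at r)"
    by (auto intro!: derivative_eq_intros)
  ultimately have "((\<lambda>r. - 2 * h^4 / (r\<^sup>2 + h\<^sup>2) - 3 * h^6 / (4 * (r\<^sup>2 + h\<^sup>2)\<^sup>2) + h\<^sup>2 * ln (r\<^sup>2 + h\<^sup>2))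
      has_real_derivative (2 * h^4 / s\<^sup>2 + 3 * h^6 / (2 * s^3) + h\<^sup>2 / s) * (2 * r)) (at r)"
    unfolding s_def by (rule DERIV_chain2)
  moreover have "((\<lambda>r. P * m * exp ((r - 1) / m)) has_real_derivative P * exp ((r - 1) / m)) (at r)"
    using assms by (auto intro!: derivative_eq_intros)
  ultimately have "(majorant_primitive h m P has_real_derivative
      (2 * h^4 / s\<^sup>2 + 3 * h^6 / (2 * s^3) + h\<^sup>2 / s) * (2 * r) + P * exp ((r - 1) / m)) (at r)"
    unfolding majorant_primitive_def by (rule DERIV_add)
  moreover have "(2 * h^4 / s\<^sup>2 + 3 * h^6 / (2 * s^3) + h\<^sup>2 / s) * (2 * r) + P * exp ((r - 1) / m)
      = density_majorant h m P r"
    unfolding density_majorant_def s_def[symmetric] using \<open>0 < s\<close>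
    by (simp add: field_simps power2_eq_square power3_eq_cube)
  ultimately show ?thesis
    by simp
qed

lemma density_majorant_has_integral:
  assumes "0 < h" and "0 < m"
  shows "(density_majorant h m P has_integral
    (majorant_primitive h m P 1 - majorant_primitive h m P 0)) {0<..<1}"
proof -
  have "(density_majorant h m P has_integral
      (majorant_primitive h m P 1 - majorant_primitive h m P 0)) {0..1}"
    using majorant_primitive_has_derivative[OF assms]
    by (intro fundamental_theorem_of_calculus)
       (auto simp flip: has_real_derivative_iff_has_vector_derivative
         intro: has_field_derivative_at_within)
  then show ?thesis
    by (simp add: has_integral_Icc_iff_Ioo)
qed

lemma density_majorant_nonneg: "0 < h \<Longrightarrow> 0 \<le> P \<Longrightarrow> 0 \<le> r \<Longrightarrow> 0 \<le> density_majorant h m P r"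
  unfolding density_majorant_def
  by (intro add_nonneg_nonneg mult_nonneg_nonneg divide_nonneg_nonneg) auto

lemma majorant_primitive_diff_le:
  assumes "0 < h" and "0 < m" and "0 \<le> P"
  shows "majorant_primitive h m P 1 - majorant_primitive h m P 0
    \<le> 11/4 * h\<^sup>2 + h^4 + 2 * h\<^sup>2 * ln (1/h) + P * m"
proof -
  have "ln (h\<^sup>2) = - 2 * ln (1/h)"
    using assms by (simp add: ln_div ln_realpow)
  then have "majorant_primitive h m P 0 = - 2 * h\<^sup>2 - 3/4 * h\<^sup>2 - 2 * h\<^sup>2 * ln (1/h) + P*m*exp(-1/m)"
    using assms
    by (simp add: majorant_primitive_def power2_eq_square power_numeral_reduce field_simps)
  moreover have "majorant_primitive h m P 1
      = - 2*h^4/(1+h\<^sup>2) - 3*h^6/(4*(1+h\<^sup>2)\<^sup>2) + h\<^sup>2*ln(1+h\<^sup>2) + P*m"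
    by (simp add: majorant_primitive_def add.commute)
  moreover have "0 \<le> 2*h^4/(1+h\<^sup>2)" "0 \<le> 3*h^6/(4*(1+h\<^sup>2)\<^sup>2)" "0 \<le> P*m*exp(-1/m)"
    using assms by auto
  moreover have "h\<^sup>2 * ln (1+h\<^sup>2) \<le> h\<^sup>2 * h\<^sup>2"
    using ln_add_one_self_le_self[of "h\<^sup>2"] by (intro mult_left_mono) (auto simp: add.commute)
  moreover have "h\<^sup>2 * h\<^sup>2 = h^4"
    by (simp add: power2_eq_square power4_eq_xxxx)
  ultimately show ?thesis
    by linarith
qed

lemma layer_amplitude_abs_le:
  assumes "0 < h" and "h \<le> 1" and "0 \<le> \<delta>"
  shows "\<bar>layer_amplitude h (sqrt h) \<delta>\<bar> \<le> 2 * (\<delta> + h)"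
proof -
  have "exp (- 1 / sqrt h) \<le> exp (-1)"
    using assms by (simp add: field_simps)
  also have "exp (-1) \<le> (1/2::real)"
    using exp_ge_add_one_self[of 1] by (simp add: exp_minus field_simps)
  finally have denominator: "1/2 \<le> 1 - exp (- 1 / sqrt h)"
    by simp
  have "sqrt (1 + h\<^sup>2) \<le> 1 + h"
    using assms by (intro real_le_lsqrt) (auto simp: power2_eq_square algebra_simps)
  moreover have "1 \<le> sqrt (1 + h\<^sup>2)"
    by simp
  ultimately have "\<bar>sqrt (1 + h\<^sup>2) - h - (1 - \<delta>)\<bar> \<le> \<delta> + h"
    using assms by linarith
  moreover have "\<bar>1 - exp (- 1 / sqrt h)\<bar> = 1 - exp (- 1 / sqrt h)"
    using denominator by simp
  ultimately have "\<bar>layer_amplitude h (sqrt h) \<delta>\<bar> \<le> (\<delta> + h) / (1/2)"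
    unfolding layer_amplitude_def abs_divide using denominator by (intro frac_le) auto
  then show ?thesis
    by simp
qed

lemma amplitude_powers_le:
  fixes c \<delta> h :: real
  assumes "\<bar>c\<bar> \<le> 2 * (\<delta> + h)"
  shows "c\<^sup>2 \<le> 8 * \<delta>\<^sup>2 + 8 * h\<^sup>2" and "c^4 \<le> 128 * \<delta>^4 + 128 * h^4"
proof -
  have "c\<^sup>2 \<le> (2 * (\<delta> + h))\<^sup>2"
    using assms abs_le_square_iff by fastforce
  moreover have "(2 * (\<delta> + h))\<^sup>2 = 4 * (\<delta> + h)\<^sup>2"
    by (simp add: power2_eq_square algebra_simps)
  ultimately show c2: "c\<^sup>2 \<le> 8 * \<delta>\<^sup>2 + 8 * h\<^sup>2"
    using square_sum2_le[of \<delta> h] by linarith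
  have "(c\<^sup>2)\<^sup>2 \<le> (8 * \<delta>\<^sup>2 + 8 * h\<^sup>2)\<^sup>2"
    using c2 by (intro power_mono) auto
  moreover have "(8 * \<delta>\<^sup>2 + 8 * h\<^sup>2)\<^sup>2 = 64 * (\<delta>\<^sup>2 + h\<^sup>2)\<^sup>2"
    by (simp add: power2_eq_square algebra_simps)
  ultimately show "c^4 \<le> 128 * \<delta>^4 + 128 * h^4"
    using square_sum2_le[of "\<delta>\<^sup>2" "h\<^sup>2"] by (simp flip: power_mult)
qed

lemma layer_weight_le:
  assumes "0 < h" and "h \<le> 1" and c: "\<bar>c\<bar> \<le> 2 * (\<delta> + h)"
  shows "(700 * c\<^sup>2 + 6 * c^4 / h) * sqrt h
    \<le> 5600 * (\<delta>\<^sup>2 * sqrt h) + 768 * (\<delta>^4 / sqrt h) + 6368 * h\<^sup>2"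
proof -
  define m where "m = sqrt h"
  have "h\<^sup>2 \<le> h" "h \<le> sqrt h"
    using assms by (auto intro!: real_le_rsqrt simp: power2_eq_square mult_left_le_one_le)
  then have m: "0 < m" "m\<^sup>2 = h" "m \<le> 1" "h\<^sup>2 \<le> m"
    using assms unfolding m_def by auto
  note c2 = amplitude_powers_le(1)[OF c] and c4 = amplitude_powers_le(2)[OF c]
  have "c\<^sup>2 * m \<le> 8 * (\<delta>\<^sup>2 * m) + 8 * h\<^sup>2"
    using mult_right_mono[OF c2, of m] mult_left_mono[of m 1 "8 * h\<^sup>2"] m
    by (simp add: algebra_simps)
  moreover have "c^4 / m \<le> 128 * (\<delta>^4 / m) + 128 * h\<^sup>2"
  proof -
    have "h^4 \<le> h\<^sup>2 * m"
      using mult_left_mono[OF \<open>h\<^sup>2 \<le> m\<close>, of "h\<^sup>2"] by (simp add: power2_eq_square power4_eq_xxxx)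
    then have "h^4 / m \<le> h\<^sup>2"
      using m by (simp add: divide_le_eq)
    moreover have "c^4 / m \<le> 128 * (\<delta>^4 / m) + 128 * (h^4 / m)"
      using divide_right_mono[OF c4, of m] m by (simp add: add_divide_distrib)
    ultimately show ?thesis
      by linarith
  qed
  moreover have "(700 * c\<^sup>2 + 6 * c^4 / h) * m = 700 * (c\<^sup>2 * m) + 6 * (c^4 / m)"
    unfolding m(2)[symmetric] using m(1) by (simp add: field_simps power2_eq_square)
  ultimately show ?thesis
    unfolding m_def by linarith
qed

lemma ansatz_energy_le:
  assumes "0 < h" and "h \<le> 1/2" and "\<bar>c\<bar> \<le> 2 * (\<delta> + h)"
  defines "P \<equiv> 700 * c\<^sup>2 + 6 * c^4 / h"
  shows "majorant_primitive h (sqrt h) P 1 - majorant_primitive h (sqrt h) P 0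
    \<le> 20000 * (\<delta>\<^sup>2 * h powr (1/2) + h\<^sup>2 * ln (1/h) + \<delta>^4 * h powr (-1/2))"
proof -
  have "0 \<le> P"
    using assms by (simp add: P_def)
  then have "majorant_primitive h (sqrt h) P 1 - majorant_primitive h (sqrt h) P 0
      \<le> 11/4 * h\<^sup>2 + h^4 + 2 * h\<^sup>2 * ln (1/h) + P * sqrt h"
    using assms by (intro majorant_primitive_diff_le) auto
  moreover have "P * sqrt h \<le> 5600 * (\<delta>\<^sup>2 * sqrt h) + 768 * (\<delta>^4 / sqrt h) + 6368 * h\<^sup>2"
    unfolding P_def using assms by (intro layer_weight_le) auto
  moreover have "1/2 \<le> ln (1/h)"
    using ln_le_minus_one[of h] assms by (simp add: ln_div)
  then have "h\<^sup>2 \<le> 2 * (h\<^sup>2 * ln (1/h))" "0 \<le> h\<^sup>2 * ln (1/h)"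
    using mult_left_mono[of "1/2" "ln (1/h)" "h\<^sup>2"] by auto
  moreover have "h^4 \<le> h\<^sup>2"
    using assms by (intro power_decreasing) auto
  moreover have "0 \<le> \<delta>\<^sup>2 * sqrt h" "0 \<le> \<delta>^4 / sqrt h"
    using assms by auto
  moreover have "\<delta>\<^sup>2 * h powr (1/2) = \<delta>\<^sup>2 * sqrt h" "\<delta>^4 * h powr (-1/2) = \<delta>^4 / sqrt h"
    using assms by (simp_all add: powr_half_sqrt powr_minus_divide)
  moreover have "2 * h\<^sup>2 * ln (1/h) = 2 * (h\<^sup>2 * ln (1/h))"
    by simp
  ultimately show ?thesis
    unfolding distrib_left by linarith
qed

theorem lemma2p3:
  shows "\<exists>C>0. \<forall>\<delta> h::real. 0 \<le> \<delta> \<and> \<delta> \<le> 1 \<and> 0 < h \<and> h \<le> 1/2 \<longrightarrow>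
    (INF p\<in>Adm \<delta>. Eh h (fst p) (snd p))
      \<le> ennreal (C * (\<delta>\<^sup>2 * h powr (1/2) + h\<^sup>2 * ln (1/h) + \<delta>^4 * h powr (-1/2)))"
proof (intro exI[of _ 20000] conjI allI impI)
  fix \<delta> h :: real
  assume "0 \<le> \<delta> \<and> \<delta> \<le> 1 \<and> 0 < h \<and> h \<le> 1/2"
  then have \<delta>: "0 \<le> \<delta>" and h: "0 < h" "h \<le> 1/2"
    by auto
  define m c where "m = sqrt h" and "c = layer_amplitude h m \<delta>"
  define P where "P = 700 * c\<^sup>2 + 6 * c^4 / h"
  have m: "0 < m"
    using h by (simp add: m_def)
  have "(INF p\<in>Adm \<delta>. Eh h (fst p) (snd p)) \<le> Eh h (u_ansatz m c) (w_ansatz h m c)"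
    using ansatz_in_Adm[OF h(1) m w_profile_layer_amplitude_at_1[OF m]]
    unfolding c_def by (rule INF_lower2) simp
  also have "\<dots> \<le> ennreal (majorant_primitive h m P 1 - majorant_primitive h m P 0)"
    by (rule Eh_le_has_integral[OF _ density_majorant_nonneg
          density_majorant_has_integral[OF h(1) m]])
       (use energy_density_ansatz_le h in \<open>auto simp: m_def P_def\<close>)
  also have "\<dots> \<le> ennreal (20000 * (\<delta>\<^sup>2 * h powr (1/2) + h\<^sup>2 * ln (1/h) + \<delta>^4 * h powr (-1/2)))"
    using ansatz_energy_le[OF h] layer_amplitude_abs_le[of h \<delta>] h \<delta>
    unfolding m_def c_def P_def by (intro ennreal_leI) simp
  finally show "(INF p\<in>Adm \<delta>. Eh h (fst p) (snd p))
      \<le> ennreal (20000 * (\<delta>\<^sup>2 * h powr (1/2) + h\<^sup>2 * ln (1/h) + \<delta>^4 * h powr (-1/2)))" .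
qed simp

end
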